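(* Let $X$ and $Y$ be pre-ordered Banach spaces with closed cones, and suppose $Y$ is $\alpha$-normal for some $\alpha>0$. If the operator norm on $B(X,Y)$ is positively attained, then $B(X,Y)$ is $\alpha$-normal.
   Context: A pre-ordered Banach space is a real Banach space $X$ with a cone $X_+$ (a subset with $X_++X_+\subseteq X_+$, $\lambda X_+\subseteq X_+$ for $\lambda\ge0$); $x\ge y$ means $x-y\in X_+$. $B(X,Y)$ is the space of bounded linear operators with the operator norm, pre-ordered by the cone $B(X,Y)_+=\{T: TX_+\subseteq Y_+\}$. A pre-ordered Banach space $Z$ is $\alpha$-normal if $0\le x\le y$ implies $\|x\|\le\alpha\|y\|$. For $T\in B(X,Y)$ put $\|T\|_+=\sup\{\|Tx\|: x\in X_+,\ \|x\|=1\}$; the operator norm on $B(X,Y)$ is positively attained if $\|T\|=\|T\|_+$ for all $T\in B(X,Y)_+$. *)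

theory Defs
  imports "HOL-Analysis.Analysis"
begin

definition is_cone :: "'a::real_vector set \<Rightarrow> bool" where
  "is_cone C \<longleftrightarrow> (\<forall>x\<in>C. \<forall>y\<in>C. x + y \<in> C) \<and> (\<forall>x\<in>C. \<forall>c::real. c \<ge> 0 \<longrightarrow> c *\<^sub>R x \<in> C)"

text \<open>alpha-normality of a pre-ordered normed space with cone C:
  0 \<le> x \<le> y (i.e. x in C and y - x in C) implies norm x \<le> alpha * norm y.\<close>
definition alpha_normal :: "'a::real_normed_vector set \<Rightarrow> real \<Rightarrow> bool" where
  "alpha_normal C \<alpha> \<longleftrightarrow> (\<forall>x y. x \<in> C \<and> y - x \<in> C \<longrightarrow> norm x \<le> \<alpha> * norm y)"

definition op_cone :: "'a::real_normed_vector set \<Rightarrow> 'b::real_normed_vector set \<Rightarrow> ('a \<Rightarrow>\<^sub>L 'b) set" where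
  "op_cone CX CY = {T. blinfun_apply T ` CX \<subseteq> CY}"

definition pos_norm :: "'a::real_normed_vector set \<Rightarrow> ('a \<Rightarrow>\<^sub>L 'b::real_normed_vector) \<Rightarrow> real" where
  "pos_norm CX T = (if {x \<in> CX. norm x = 1} = {} then 0
      else (SUP x\<in>{x \<in> CX. norm x = 1}. norm (blinfun_apply T x)))"

definition positively_attained :: "'a::real_normed_vector set \<Rightarrow> 'b::real_normed_vector set \<Rightarrow> bool" where
  "positively_attained CX CY \<longleftrightarrow> (\<forall>T \<in> op_cone CX CY. norm T = pos_norm CX T)"

end

theory Submission
  imports Defs
begin

text \<open>If \<open>0 \<le> S \<le> T\<close> in \<open>B(X,Y)\<close>, then \<open>0 \<le> S x \<le> T x\<close> for every positive \<open>x\<close>, so normality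
  of \<open>Y\<close> gives \<open>\<parallel>S x\<parallel> \<le> \<alpha> \<parallel>T x\<parallel> \<le> \<alpha> \<parallel>T\<parallel>\<close>. Taking the supremum over positive unit vectors
  bounds \<open>\<parallel>S\<parallel>\<^sub>+\<close>, which equals \<open>\<parallel>S\<parallel>\<close> because the norm is positively attained.\<close>

lemma pos_norm_le:
  assumes "0 \<le> c" and "\<And>x. x \<in> CX \<Longrightarrow> norm x = 1 \<Longrightarrow> norm (blinfun_apply T x) \<le> c"
  shows "pos_norm CX T \<le> c"
  using assms unfolding pos_norm_def by (auto intro: cSUP_least)

lemma alpha_normal_blinfun_apply_le:
  assumes "alpha_normal CY \<alpha>" and "S \<in> op_cone CX CY" and "T - S \<in> op_cone CX CY"
    and "x \<in> CX"
  shows "norm (blinfun_apply S x) \<le> \<alpha> * norm (blinfun_apply T x)"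
proof -
  have "blinfun_apply S x \<in> CY" and "blinfun_apply T x - blinfun_apply S x \<in> CY"
    using assms(2-4) by (auto simp: op_cone_def blinfun.diff_left)
  then show ?thesis
    using assms(1) unfolding alpha_normal_def by blast
qed

theorem proposition4p5:
  fixes CX :: "'a::banach set" and CY :: "'b::banach set" and \<alpha> :: real
  assumes "is_cone CX" and "closed CX"
    and "is_cone CY" and "closed CY"
    and "\<alpha> > 0" and "alpha_normal CY \<alpha>"
    and "positively_attained CX CY"
  shows "alpha_normal (op_cone CX CY) \<alpha>"
  unfolding alpha_normal_def
proof (intro allI impI)
  fix S T :: "'a \<Rightarrow>\<^sub>L 'b"
  assume ST: "S \<in> op_cone CX CY \<and> T - S \<in> op_cone CX CY"
  have "pos_norm CX S \<le> \<alpha> * norm T"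
  proof (rule pos_norm_le)
    show "0 \<le> \<alpha> * norm T"
      using \<open>\<alpha> > 0\<close> by simp
    fix x
    assume "x \<in> CX" and "norm x = 1"
    then have "norm (blinfun_apply S x) \<le> \<alpha> * norm (blinfun_apply T x)"
      using alpha_normal_blinfun_apply_le \<open>alpha_normal CY \<alpha>\<close> ST by blast
    also have "\<dots> \<le> \<alpha> * norm T"
      using norm_blinfun[of T x] \<open>norm x = 1\<close> \<open>\<alpha> > 0\<close> by simp
    finally show "norm (blinfun_apply S x) \<le> \<alpha> * norm T" .
  qed
  moreover have "norm S = pos_norm CX S"
    using ST \<open>positively_attained CX CY\<close> unfolding positively_attained_def by blast
  ultimately show "norm S \<le> \<alpha> * norm T"
    by simp
qed

end
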